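(* Let $q$ be a root of unity with $q^4\neq1$, let $\sigma\in\mathbb C^\times$ be general, $w\in\mathbb C$, and $(\vec s,\vec t)\in E^0_{\sigma,w}$. Let $V$ have basis $\{v_i:i\in\mathbb Z/D\}$. Then $\rho(\alpha_0)v_i=\lambda_iv_i$, $\rho(\alpha_1)v_i=q^{2i+1}\sigma s_iv_{i+1}+q^{-2i+1}\sigma^{-1}t_{i-1}v_{i-1}$, $\rho(\alpha_\infty)v_i=s_iv_{i+1}+t_{i-1}v_{i-1}$ define a representation $\rho:\mathcal S_q(\Sigma_{1,1})\to\mathrm{End}(V)$, and moreover $\rho(A_0)=z_0\,\mathrm{id}_V$ and $\rho(p)=w\,\mathrm{id}_V$.
   Context: $\mathcal S_q(\Sigma_{1,1})$ is the Kauffman bracket skein algebra of the one-punctured torus (framed links in $\Sigma_{1,1}\times(-1,1)$ modulo the Kauffman bracket relation and trivial loop $=-q^2-q^{-2}$). It is generated by the slope $0,1,\infty$ curves $\alpha_0,\alpha_1,\alpha_\infty$ subject to $q\alpha_0\alpha_\infty-q^{-1}\alpha_\infty\alpha_0=(q^2-q^{-2})\alpha_1$, $q\alpha_1\alpha_0-q^{-1}\alpha_0\alpha_1=(q^2-q^{-2})\alpha_\infty$, $q\alpha_\infty\alpha_1-q^{-1}\alpha_1\alpha_\infty=(q^2-q^{-2})\alpha_0$; the peripheral curve is $p=q\alpha_0\alpha_\infty\alpha_1-q^2\alpha_0^2-q^2\alpha_1^2-q^{-2}\alpha_\infty^2+q^2+q^{-2}$. For $q$ a root of unity, $n=\mathrm{ord}(q^2)$,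 $D=n$, $T_D$ is the Chebyshev polynomial with $T_D(t+t^{-1})=t^D+t^{-D}$, and $A_0=T_D(\alpha_0)$. For $\sigma\in\mathbb C^\times$ set $z_0=\sigma^D+\sigma^{-D}$, $\lambda_i=q^{2i}\sigma+q^{-2i}\sigma^{-1}$, $\hat\lambda_i=q^{2i}\sigma-q^{-2i}\sigma^{-1}$ ($i\in\mathbb Z/D$). $\sigma$ is general if $z_0\neq\pm2$, or $z_0=-2$ and $n$ is even (equivalently, all $\hat\lambda_i\neq0$). For general $\sigma$ and $w\in\mathbb C$: $r_i(\sigma,w)=\dfrac{w+q^{4i+2}\sigma^2+q^{-4i-2}\sigma^{-2}}{\hat\lambda_i\hat\lambda_{i+1}}$ and $E^0_{\sigma,w}=\{(s_1,\dots,s_D,t_1,\dots,t_D)\in\mathbb C^{2D}: s_it_i=r_i(\sigma,w)\ \forall i\}$ (indices mod $D$). *)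

theory Defs
  imports Complex_Main
begin

text \<open>Endomorphisms of V = span of basis v_0,...,v_{D-1} (indices read mod D) are
represented as D x D matrices M :: nat => nat => complex, where M i j is the
coefficient of v_i in M v_j. Only entries with i, j < D are meaningful.\<close>

type_synonym cmat = "nat \<Rightarrow> nat \<Rightarrow> complex"

definition mmul :: "nat \<Rightarrow> cmat \<Rightarrow> cmat \<Rightarrow> cmat" where
  "mmul D A B = (\<lambda>i j. \<Sum>l<D. A i l * B l j)"

definition madd :: "cmat \<Rightarrow> cmat \<Rightarrow> cmat" where
  "madd A B = (\<lambda>i j. A i j + B i j)"

definition msmult :: "complex \<Rightarrow> cmat \<Rightarrow> cmat" where
  "msmult c A = (\<lambda>i j. c * A i j)"

definition mid :: cmat where
  "mid = (\<lambda>i j. if i = j then 1 else 0)"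

definition meq :: "nat \<Rightarrow> cmat \<Rightarrow> cmat \<Rightarrow> bool" where
  "meq D A B \<longleftrightarrow> (\<forall>i<D. \<forall>j<D. A i j = B i j)"

text \<open>Chebyshev polynomial T_k applied to a matrix: T_0 = 2, T_1 = x,
T_{k+2} = x T_{k+1} - T_k, so that T_k(t + 1/t) = t^k + t^{-k}.\<close>
fun cheb_mat :: "nat \<Rightarrow> nat \<Rightarrow> cmat \<Rightarrow> cmat" where
  "cheb_mat D 0 A = msmult 2 mid"
| "cheb_mat D (Suc 0) A = A"
| "cheb_mat D (Suc (Suc k)) A =
     madd (mmul D A (cheb_mat D (Suc k) A)) (msmult (-1) (cheb_mat D k A))"

definition root_of_unity :: "complex \<Rightarrow> bool" where
  "root_of_unity q \<longleftrightarrow> (\<exists>m::nat. m > 0 \<and> q ^ m = 1)"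

definition ordq2 :: "complex \<Rightarrow> nat" where
  "ordq2 q = (LEAST k::nat. k > 0 \<and> (q\<^sup>2) ^ k = 1)"

definition z0 :: "nat \<Rightarrow> complex \<Rightarrow> complex" where
  "z0 D \<sigma> = \<sigma> ^ D + inverse \<sigma> ^ D"

definition lam :: "complex \<Rightarrow> complex \<Rightarrow> int \<Rightarrow> complex" where
  "lam q \<sigma> i = q powi (2*i) * \<sigma> + q powi (-2*i) * inverse \<sigma>"

definition lamhat :: "complex \<Rightarrow> complex \<Rightarrow> int \<Rightarrow> complex" where
  "lamhat q \<sigma> i = q powi (2*i) * \<sigma> - q powi (-2*i) * inverse \<sigma>"

definition general_sigma :: "complex \<Rightarrow> complex \<Rightarrow> bool" where
  "general_sigma q \<sigma> \<longleftrightarrow> \<sigma> \<noteq> 0 \<and>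
     ((z0 (ordq2 q) \<sigma> \<noteq> 2 \<and> z0 (ordq2 q) \<sigma> \<noteq> -2) \<or>
      (z0 (ordq2 q) \<sigma> = -2 \<and> even (ordq2 q)))"

definition r_coef :: "complex \<Rightarrow> complex \<Rightarrow> complex \<Rightarrow> int \<Rightarrow> complex" where
  "r_coef q \<sigma> w i = (w + q powi (4*i+2) * \<sigma>\<^sup>2 + q powi (-4*i-2) * inverse (\<sigma>\<^sup>2)) /
                     (lamhat q \<sigma> i * lamhat q \<sigma> (i+1))"

text \<open>E^0_{sigma,w}: s, t indexed by i in {0..<D} (representatives of Z/D).\<close>
definition E0 :: "complex \<Rightarrow> complex \<Rightarrow> complex \<Rightarrow> ((nat \<Rightarrow> complex) \<times> (nat \<Rightarrow> complex)) set" where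
  "E0 q \<sigma> w = {(s, t). \<forall>i < ordq2 q. s i * t i = r_coef q \<sigma> w (int i)}"

definition rho0 :: "nat \<Rightarrow> complex \<Rightarrow> complex \<Rightarrow> cmat" where
  "rho0 D q \<sigma> = (\<lambda>i j. if i = j then lam q \<sigma> (int j) else 0)"

definition rho1 :: "nat \<Rightarrow> complex \<Rightarrow> complex \<Rightarrow> (nat \<Rightarrow> complex) \<Rightarrow> (nat \<Rightarrow> complex) \<Rightarrow> cmat" where
  "rho1 D q \<sigma> s t = (\<lambda>i j.
     (if i = (j + 1) mod D then q powi (2 * int j + 1) * \<sigma> * s j else 0) +
     (if j = (i + 1) mod D then q powi (-2 * int j + 1) * inverse \<sigma> * t i else 0))"

definition rhoInf :: "nat \<Rightarrow> (nat \<Rightarrow> complex) \<Rightarrow> (nat \<Rightarrow> complex) \<Rightarrow> cmat" where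
  "rhoInf D s t = (\<lambda>i j.
     (if i = (j + 1) mod D then s j else 0) +
     (if j = (i + 1) mod D then t i else 0))"

definition skein_rels :: "nat \<Rightarrow> complex \<Rightarrow> cmat \<Rightarrow> cmat \<Rightarrow> cmat \<Rightarrow> bool" where
  "skein_rels D q a0 a1 ainf \<longleftrightarrow>
     meq D (madd (msmult q (mmul D a0 ainf)) (msmult (- inverse q) (mmul D ainf a0)))
           (msmult (q^2 - inverse (q^2)) a1) \<and>
     meq D (madd (msmult q (mmul D a1 a0)) (msmult (- inverse q) (mmul D a0 a1)))
           (msmult (q^2 - inverse (q^2)) ainf) \<and>
     meq D (madd (msmult q (mmul D ainf a1)) (msmult (- inverse q) (mmul D a1 ainf)))
           (msmult (q^2 - inverse (q^2)) a0)"

definition periph :: "nat \<Rightarrow> complex \<Rightarrow> cmat \<Rightarrow> cmat \<Rightarrow> cmat \<Rightarrow> cmat" where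
  "periph D q a0 a1 ainf =
     madd (msmult q (mmul D a0 (mmul D ainf a1)))
    (madd (msmult (- (q^2)) (mmul D a0 a0))
    (madd (msmult (- (q^2)) (mmul D a1 a1))
    (madd (msmult (- inverse (q^2)) (mmul D ainf ainf))
          (msmult (q^2 + inverse (q^2)) mid))))"

end

theory Submission
  imports Defs
begin

text \<open>All three operators are band matrices for the cyclic basis, so every expression in the
relations is a band matrix with at most five nonzero diagonals, and each identity reduces to
identities between diagonal coefficients. Put u_k = q^(2k) \<sigma>; then lambda_k = u_k + 1/u_k,
lambdahat_k = u_k - 1/u_k, u_(k+1) = q^2 u_k, and u has period D because q^(2D) = 1. Off the
main diagonal the coefficient identities are Laurent polynomial identities in q and u_j. The main
diagonals of the third relation and of p involve s_j t_j = r_j and s_(j-1) t_(j-1) = r_(j-1);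
since r_k lambdahat_(k+1) = N_k / lambdahat_k for the numerator N_k of r_k, they too become Laurent
polynomial identities once multiplied by lambdahat_j, which is nonzero exactly because \<sigma> is
general. Finally T_D(lambda_j) = u_j^D + u_j^(-D) = \<sigma>^D + \<sigma>^(-D) = z_0.\<close>

definition succ_mod :: "nat \<Rightarrow> nat \<Rightarrow> nat" where
  "succ_mod D j = (j + 1) mod D"

definition pred_mod :: "nat \<Rightarrow> nat \<Rightarrow> nat" where
  "pred_mod D j = (j + D - 1) mod D"

lemma succ_mod_less [simp]: "0 < D \<Longrightarrow> succ_mod D j < D"
  by (simp add: succ_mod_def)

lemma pred_mod_less [simp]: "0 < D \<Longrightarrow> pred_mod D j < D"
  by (simp add: pred_mod_def)

lemma pred_mod_succ_mod [simp]: "j < D \<Longrightarrow> pred_mod D (succ_mod D j) = j"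
  unfolding pred_mod_def succ_mod_def
  by (cases "j + 1 = D") (simp_all add: mod_add_left_eq[symmetric])

lemma succ_mod_pred_mod [simp]: "j < D \<Longrightarrow> succ_mod D (pred_mod D j) = j"
  unfolding pred_mod_def succ_mod_def
  by (cases j) (simp_all add: mod_add_left_eq)

lemma eq_succ_mod_iff: "i < D \<Longrightarrow> j < D \<Longrightarrow> j = succ_mod D i \<longleftrightarrow> i = pred_mod D j"
  by (metis pred_mod_succ_mod succ_mod_pred_mod)

lemma periodic_at_succ_mod:
  assumes "\<And>k. f (k + int D) = f k" and "j < D"
  shows "f (int (succ_mod D j)) = f (int j + 1)"
proof (cases "j + 1 = D")
  case True
  then have "int j + 1 = 0 + int D" by simp
  then show ?thesis using assms(1)[of 0] True by (simp only: succ_mod_def) simp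
next
  case False
  then show ?thesis using assms(2) by (simp add: succ_mod_def add.commute)
qed

lemma periodic_at_pred_mod:
  assumes "\<And>k. f (k + int D) = f k" and "j < D"
  shows "f (int (pred_mod D j)) = f (int j - 1)"
proof (cases j)
  case 0
  then show ?thesis using assms(1)[of "-1"] assms(2) by (simp add: pred_mod_def of_nat_diff)
next
  case (Suc m)
  then show ?thesis using assms(2) by (simp add: pred_mod_def)
qed

text \<open>Coinciding
indices for \<open>D \<le> 4\<close> are harmless: their coefficients simply add up.\<close>

definition band ::
  "nat \<Rightarrow> (nat \<Rightarrow> complex) \<Rightarrow> (nat \<Rightarrow> complex) \<Rightarrow> (nat \<Rightarrow> complex)
     \<Rightarrow> (nat \<Rightarrow> complex) \<Rightarrow> (nat \<Rightarrow> complex) \<Rightarrow> cmat" where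
  "band D a b c d e = (\<lambda>i j. if i < D \<and> j < D then
       (if i = j then a j else 0) + (if i = succ_mod D j then b j else 0)
     + (if i = pred_mod D j then c j else 0)
     + (if i = succ_mod D (succ_mod D j) then d j else 0)
     + (if i = pred_mod D (pred_mod D j) then e j else 0)
     else 0)"

abbreviation tridiag :: "nat \<Rightarrow> (nat \<Rightarrow> complex) \<Rightarrow> (nat \<Rightarrow> complex) \<Rightarrow> (nat \<Rightarrow> complex) \<Rightarrow> cmat" where
  "tridiag D a b c \<equiv> band D a b c (\<lambda>_. 0) (\<lambda>_. 0)"

abbreviation diag :: "nat \<Rightarrow> (nat \<Rightarrow> complex) \<Rightarrow> cmat" where
  "diag D a \<equiv> tridiag D a (\<lambda>_. 0) (\<lambda>_. 0)"

lemma band_cong: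
  assumes "\<And>j. j < D \<Longrightarrow> a j = a' j" "\<And>j. j < D \<Longrightarrow> b j = b' j" "\<And>j. j < D \<Longrightarrow> c j = c' j"
    "\<And>j. j < D \<Longrightarrow> d j = d' j" "\<And>j. j < D \<Longrightarrow> e j = e' j"
  shows "band D a b c d e = band D a' b' c' d' e'"
  using assms by (auto simp: band_def fun_eq_iff)

lemma madd_band:
  "madd (band D a b c d e) (band D a' b' c' d' e') =
     band D (\<lambda>j. a j + a' j) (\<lambda>j. b j + b' j) (\<lambda>j. c j + c' j) (\<lambda>j. d j + d' j) (\<lambda>j. e j + e' j)"
  by (simp add: madd_def band_def fun_eq_iff)

lemma msmult_band:
  "msmult k (band D a b c d e) =
     band D (\<lambda>j. k * a j) (\<lambda>j. k * b j) (\<lambda>j. k * c j) (\<lambda>j. k * d j) (\<lambda>j. k * e j)"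
  by (simp add: msmult_def band_def fun_eq_iff distrib_left)

lemma mmul_tridiag_right:
  assumes "j < D"
  shows "mmul D A (tridiag D a b c) i j =
           A i j * a j + A i (succ_mod D j) * b j + A i (pred_mod D j) * c j"
proof -
  have "mmul D A (tridiag D a b c) i j =
      (\<Sum>l<D. (if l = j then A i l * a j else 0) + (if l = succ_mod D j then A i l * b j else 0)
             + (if l = pred_mod D j then A i l * c j else 0))"
    unfolding mmul_def by (rule sum.cong) (use assms in \<open>auto simp: band_def distrib_left\<close>)
  then show ?thesis
    using assms by (simp add: sum.distrib)
qed

lemma if_zero_eq_of_bool_mult: "(if P then x else 0) = of_bool P * (x :: 'a :: semiring_1)"
  by simp

lemma mmul_tridiag_tridiag:
  "mmul D (tridiag D a1 b1 c1) (tridiag D a2 b2 c2) =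
     band D (\<lambda>j. a1 j * a2 j + c1 (succ_mod D j) * b2 j + b1 (pred_mod D j) * c2 j)
            (\<lambda>j. b1 j * a2 j + a1 (succ_mod D j) * b2 j)
            (\<lambda>j. c1 j * a2 j + a1 (pred_mod D j) * c2 j)
            (\<lambda>j. b1 (succ_mod D j) * b2 j)
            (\<lambda>j. c1 (pred_mod D j) * c2 j)" (is "?L = ?R")
proof (intro ext)
  fix i j
  show "?L i j = ?R i j"
  proof (cases "i < D \<and> j < D")
    case True
    then show ?thesis
      unfolding mmul_tridiag_right[OF conjunct2[OF True]]
      by (simp add: band_def if_zero_eq_of_bool_mult algebra_simps)
  next
    case False
    then show ?thesis
      by (auto simp: mmul_def band_def intro!: sum.neutral)
  qed
qed

lemma mmul_diag_band:
  "mmul D (diag D a') (band D a b c d e) =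
     band D (\<lambda>j. a' j * a j) (\<lambda>j. a' (succ_mod D j) * b j) (\<lambda>j. a' (pred_mod D j) * c j)
            (\<lambda>j. a' (succ_mod D (succ_mod D j)) * d j) (\<lambda>j. a' (pred_mod D (pred_mod D j)) * e j)" (is "?L = ?R")
proof (intro ext)
  fix i j
  have "mmul D (diag D a') (band D a b c d e) i j = (if i < D then a' i * band D a b c d e i j else 0)"
    unfolding mmul_def by (auto simp: band_def if_distrib[of "\<lambda>x. x * _"] cong: if_cong)
  then show "?L i j = ?R i j"
    by (simp add: band_def if_zero_eq_of_bool_mult algebra_simps)
qed

lemma meq_refl [simp]: "meq D A A"
  by (simp add: meq_def)

lemma meq_sym: "meq D A B \<Longrightarrow> meq D B A"
  by (simp add: meq_def)

lemma meq_trans: "meq D A B \<Longrightarrow> meq D B C \<Longrightarrow> meq D A C"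
  by (simp add: meq_def)

lemma meq_cong_iff: "meq D A A' \<Longrightarrow> meq D B B' \<Longrightarrow> meq D A B \<longleftrightarrow> meq D A' B'"
  by (simp add: meq_def)

lemma meq_madd: "meq D A A' \<Longrightarrow> meq D B B' \<Longrightarrow> meq D (madd A B) (madd A' B')"
  by (simp add: meq_def madd_def)

lemma meq_msmult: "meq D A A' \<Longrightarrow> meq D (msmult c A) (msmult c A')"
  by (simp add: meq_def msmult_def)

lemma meq_mmul: "meq D A A' \<Longrightarrow> meq D B B' \<Longrightarrow> meq D (mmul D A B) (mmul D A' B')"
  unfolding meq_def mmul_def by (auto intro!: sum.cong)

lemma skein_rels_meq_cong:
  assumes "meq D a0 a0'" "meq D a1 a1'" "meq D ainf ainf'"
  shows "skein_rels D q a0 a1 ainf \<longleftrightarrow> skein_rels D q a0' a1' ainf'"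
  unfolding skein_rels_def
  by (intro conj_cong meq_cong_iff meq_madd meq_msmult meq_mmul assms)

lemma periph_meq_cong:
  assumes "meq D a0 a0'" "meq D a1 a1'" "meq D ainf ainf'"
  shows "meq D (periph D q a0 a1 ainf) (periph D q a0' a1' ainf')"
  unfolding periph_def by (intro meq_madd meq_msmult meq_mmul assms meq_refl)

lemma mid_eq_diag: "meq D mid (diag D (\<lambda>_. 1))"
  by (simp add: meq_def mid_def band_def)

lemma msmult_mid_eq_diag: "meq D (msmult c mid) (diag D (\<lambda>_. c))"
  using meq_msmult[OF mid_eq_diag, of D c] by (simp add: msmult_band)

lemma rho0_eq_diag: "meq D (rho0 D q \<sigma>) (diag D (\<lambda>j. lam q \<sigma> (int j)))"
  by (simp add: meq_def rho0_def band_def)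

lemma rhoInf_eq_tridiag:
  "meq D (rhoInf D s t) (tridiag D (\<lambda>_. 0) s (\<lambda>j. t (pred_mod D j)))"
  unfolding meq_def rhoInf_def band_def succ_mod_def[symmetric]
  by (auto simp: eq_succ_mod_iff cong: if_cong)

lemma rho1_eq_tridiag:
  "meq D (rho1 D q \<sigma> s t)
     (tridiag D (\<lambda>_. 0) (\<lambda>j. q powi (2 * int j + 1) * \<sigma> * s j)
                (\<lambda>j. q powi (-2 * int j + 1) * inverse \<sigma> * t (pred_mod D j)))"
  unfolding meq_def rho1_def band_def succ_mod_def[symmetric]
  by (auto simp: eq_succ_mod_iff cong: if_cong)

fun chebyshev :: "nat \<Rightarrow> 'a :: comm_ring_1 \<Rightarrow> 'a" where
  "chebyshev 0 x = 2"
| "chebyshev (Suc 0) x = x"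
| "chebyshev (Suc (Suc k)) x = x * chebyshev (Suc k) x - chebyshev k x"

lemma chebyshev_add_inverse:
  fixes u :: "'a :: field"
  assumes "u \<noteq> 0"
  shows "chebyshev k (u + inverse u) = u ^ k + inverse u ^ k"
  by (induction k rule: induct_nat_012) (use assms in \<open>auto simp: field_simps\<close>)

lemma cheb_mat_meq_cong: "meq D A A' \<Longrightarrow> meq D (cheb_mat D k A) (cheb_mat D k A')"
  by (induction k rule: induct_nat_012) (simp_all add: meq_madd meq_mmul meq_msmult)

lemma cheb_mat_diag: "meq D (cheb_mat D k (diag D a)) (diag D (\<lambda>j. chebyshev k (a j)))"
proof (induction k rule: induct_nat_012)
  case 0
  show ?case
    using meq_msmult[OF mid_eq_diag, of D 2] by (simp add: msmult_band)
next
  case 1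
  show ?case by simp
next
  case (ge2 k)
  have "meq D (cheb_mat D (Suc (Suc k)) (diag D a))
     (madd (mmul D (diag D a) (diag D (\<lambda>j. chebyshev (Suc k) (a j))))
        (msmult (-1) (diag D (\<lambda>j. chebyshev k (a j)))))"
    by (simp only: cheb_mat.simps) (intro meq_madd meq_mmul meq_msmult meq_refl ge2.IH)
  also have "madd (mmul D (diag D a) (diag D (\<lambda>j. chebyshev (Suc k) (a j))))
        (msmult (-1) (diag D (\<lambda>j. chebyshev k (a j)))) = diag D (\<lambda>j. chebyshev (Suc (Suc k)) (a j))"
    by (simp add: mmul_diag_band msmult_band madd_band)
  finally show ?case .
qed

lemma ordq2_pos_and_power:
  assumes "root_of_unity q"
  shows "0 < ordq2 q \<and> (q\<^sup>2) ^ ordq2 q = 1"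
proof -
  obtain m :: nat where "0 < m" "q ^ m = 1"
    using assms unfolding root_of_unity_def by blast
  then have "(q\<^sup>2) ^ m = 1"
    by (metis power_mult mult.commute power_one)
  with \<open>0 < m\<close> have "\<exists>k. 0 < k \<and> (q\<^sup>2) ^ k = 1"
    by blast
  then show ?thesis
    unfolding ordq2_def by (rule LeastI_ex)
qed

locale cyclic_skein_rep =
  fixes q \<sigma> w :: complex and s t :: "nat \<Rightarrow> complex"
  assumes root_of_unity: "root_of_unity q"
    and general: "general_sigma q \<sigma>"
    and st_in_E0: "(s, t) \<in> E0 q \<sigma> w"
begin

abbreviation D :: nat where "D \<equiv> ordq2 q"

lemma D_pos [simp]: "0 < D"
  using ordq2_pos_and_power[OF root_of_unity] by blast

lemma q_nonzero [simp]: "q \<noteq> 0"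
  using root_of_unity by (auto simp: root_of_unity_def power_0_left)

lemma sigma_nonzero [simp]: "\<sigma> \<noteq> 0"
  using general by (simp add: general_sigma_def)

lemma q_powi_period: "q powi (2 * int D * k) = 1"
proof -
  have "q powi (2 * int D) = q powi int (2 * D)"
    by simp
  also have "\<dots> = (q\<^sup>2) ^ D"
    by (simp only: power_int_of_nat power_mult)
  also have "\<dots> = 1"
    using ordq2_pos_and_power[OF root_of_unity] by blast
  finally show ?thesis
    by (simp add: power_int_mult)
qed

definition u :: "int \<Rightarrow> complex" where
  "u k = q powi (2 * k) * \<sigma>"

lemma u_nonzero [simp]: "u k \<noteq> 0"
  by (simp add: u_def)

lemma u_add_one: "u (k + 1) = q\<^sup>2 * u k"
  by (simp add: u_def power_int_add distrib_left power2_eq_square)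

lemma u_periodic: "u (k + int D) = u k"
  using q_powi_period[of 1] by (simp add: u_def distrib_left power_int_add)

lemma u_power_D: "u k ^ D = \<sigma> ^ D"
proof -
  have "(q powi (2 * k)) ^ D = q powi (2 * int D * k)"
    by (simp add: power_int_power' mult.commute mult.left_commute)
  then show ?thesis
    by (simp add: u_def power_mult_distrib q_powi_period)
qed

lemma inverse_u: "inverse (u k) = q powi (-2 * k) * inverse \<sigma>"
  by (simp add: u_def power_int_minus)

lemma lam_eq: "lam q \<sigma> k = u k + inverse (u k)"
  by (simp add: lam_def inverse_u) (simp add: u_def)

lemma lamhat_eq: "lamhat q \<sigma> k = u k - inverse (u k)"
  by (simp add: lamhat_def inverse_u) (simp add: u_def)

lemma lamhat_nonzero: "lamhat q \<sigma> k \<noteq> 0"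
proof
  assume "lamhat q \<sigma> k = 0"
  then have "u k * u k = 1"
    by (simp add: lamhat_eq field_simps)
  then have "u k = 1 \<or> u k = -1"
    by (metis square_eq_1_iff power2_eq_square)
  then have "\<sigma> ^ D = 1 \<or> \<sigma> ^ D = (-1) ^ D"
    using u_power_D[of k] by auto
  then have "z0 D \<sigma> = 2 \<or> (z0 D \<sigma> = -2 \<and> odd D)"
    by (cases "even D") (auto simp: z0_def power_inverse)
  with general show False
    by (auto simp: general_sigma_def)
qed

lemma u_succ_mod: "j < D \<Longrightarrow> u (int (succ_mod D j)) = q\<^sup>2 * u (int j)"
  by (simp add: periodic_at_succ_mod u_periodic u_add_one)

lemma u_pred_mod: "j < D \<Longrightarrow> u (int (pred_mod D j)) = u (int j) / q\<^sup>2"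
  using u_add_one[of "int j - 1"] by (simp add: periodic_at_pred_mod u_periodic)

lemma s_mult_t: "j < D \<Longrightarrow> s j * t j = r_coef q \<sigma> w (int j)"
  using st_in_E0 by (simp add: E0_def)

abbreviation A0 :: cmat where
  "A0 \<equiv> diag D (\<lambda>j. u (int j) + inverse (u (int j)))"

abbreviation A1 :: cmat where
  "A1 \<equiv> tridiag D (\<lambda>_. 0) (\<lambda>j. q * u (int j) * s j) (\<lambda>j. q * inverse (u (int j)) * t (pred_mod D j))"

abbreviation Ainf :: cmat where
  "Ainf \<equiv> tridiag D (\<lambda>_. 0) s (\<lambda>j. t (pred_mod D j))"

lemma rho_eq_bands:
  "meq D (rho0 D q \<sigma>) A0" "meq D (rho1 D q \<sigma> s t) A1" "meq D (rhoInf D s t) Ainf"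
proof -
  show "meq D (rho0 D q \<sigma>) A0"
    using rho0_eq_diag[of D q \<sigma>] by (simp add: lam_eq)
  have "q powi (2 * int j + 1) * \<sigma> = q * u (int j)"
    "q powi (-2 * int j + 1) * inverse \<sigma> = q * inverse (u (int j))" for j
    by (simp_all add: u_def inverse_u power_int_add power_int_diff divide_inverse mult_ac)
  then show "meq D (rho1 D q \<sigma> s t) A1"
    using rho1_eq_tridiag[of D q \<sigma> s t] by simp
  show "meq D (rhoInf D s t) Ainf"
    by (rule rhoInf_eq_tridiag)
qed

definition r_num :: "int \<Rightarrow> complex" where
  "r_num k = w + q\<^sup>2 * u k ^ 2 + inverse (q\<^sup>2 * u k ^ 2)"

lemma lamhat_succ: "lamhat q \<sigma> (k + 1) = q\<^sup>2 * u k - inverse (q\<^sup>2 * u k)"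
  by (simp add: lamhat_eq u_add_one)

lemma u_diff_one: "u (k - 1) = u k / q\<^sup>2"
  using u_add_one[of "k - 1"] by simp

lemma lamhat_pred: "lamhat q \<sigma> (k - 1) = u k / q\<^sup>2 - inverse (u k / q\<^sup>2)"
  by (simp add: lamhat_eq u_diff_one)

lemma r_coef_eq_r_num: "r_coef q \<sigma> w k = r_num k / (lamhat q \<sigma> k * lamhat q \<sigma> (k + 1))"
proof -
  have "q powi (4 * k + 2) * \<sigma>\<^sup>2 = q\<^sup>2 * u k ^ 2"
    by (simp add: u_def power_int_add power_mult_distrib power_int_power' mult_ac)
  moreover have "q powi (-4 * k - 2) * inverse (\<sigma>\<^sup>2) = inverse (q\<^sup>2 * u k ^ 2)"
    by (simp add: u_def power_int_diff power_mult_distrib power_int_power' power_int_minus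
        power_inverse divide_inverse mult_ac)
  ultimately show ?thesis
    by (simp add: r_coef_def r_num_def)
qed

lemma r_num_diff: "r_num k - r_num (k - 1) = (q\<^sup>2 - inverse (q\<^sup>2)) * lam q \<sigma> k * lamhat q \<sigma> k"
  by (simp add: r_num_def lam_eq lamhat_eq u_diff_one field_simps) algebra

lemma r_num_periph:
  "u k * r_num k - inverse (u k) * r_num (k - 1)
     = (w + q\<^sup>2 * (lam q \<sigma> k)\<^sup>2 - q\<^sup>2 - inverse (q\<^sup>2)) * lamhat q \<sigma> k"
  by (simp add: r_num_def lam_eq lamhat_eq u_diff_one field_simps) algebra

lemma r_coef_lamhat_succ: "r_coef q \<sigma> w k * lamhat q \<sigma> (k + 1) = r_num k / lamhat q \<sigma> k"
  using lamhat_nonzero[of "k + 1"] by (simp add: r_coef_eq_r_num)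

lemma r_coef_lamhat_pred: "r_coef q \<sigma> w (k - 1) * lamhat q \<sigma> (k - 1) = r_num (k - 1) / lamhat q \<sigma> k"
  using lamhat_nonzero[of "k - 1"] by (simp add: r_coef_eq_r_num)

lemma r_coef_diff:
  "r_coef q \<sigma> w k * lamhat q \<sigma> (k + 1) - r_coef q \<sigma> w (k - 1) * lamhat q \<sigma> (k - 1)
     = (q\<^sup>2 - inverse (q\<^sup>2)) * lam q \<sigma> k"
  using lamhat_nonzero[of k]
  by (simp add: r_coef_lamhat_succ r_coef_lamhat_pred diff_divide_distrib[symmetric] r_num_diff)

lemma r_coef_periph:
  "u k * r_coef q \<sigma> w k * lamhat q \<sigma> (k + 1)
     - inverse (u k) * r_coef q \<sigma> w (k - 1) * lamhat q \<sigma> (k - 1)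
     = w + q\<^sup>2 * (lam q \<sigma> k)\<^sup>2 - q\<^sup>2 - inverse (q\<^sup>2)"
proof -
  have "u k * r_coef q \<sigma> w k * lamhat q \<sigma> (k + 1)
      - inverse (u k) * r_coef q \<sigma> w (k - 1) * lamhat q \<sigma> (k - 1)
      = (u k * r_num k - inverse (u k) * r_num (k - 1)) / lamhat q \<sigma> k"
    by (simp only: mult.assoc r_coef_lamhat_succ r_coef_lamhat_pred diff_divide_distrib
        times_divide_eq_right)
  then show ?thesis
    using lamhat_nonzero[of k] by (simp add: r_num_periph)
qed

lemma r_coef_periodic: "r_coef q \<sigma> w (k + int D) = r_coef q \<sigma> w k"
  using u_periodic[of "k + 1"] by (simp add: r_coef_eq_r_num r_num_def lamhat_eq u_periodic add_ac)

lemma s_mult_t_pred: "j < D \<Longrightarrow> s (pred_mod D j) * t (pred_mod D j) = r_coef q \<sigma> w (int j - 1)"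
  by (simp add: s_mult_t periodic_at_pred_mod r_coef_periodic)

lemma band_rel_0_inf:
  "madd (msmult q (mmul D A0 Ainf)) (msmult (- inverse q) (mmul D Ainf A0))
     = msmult (q\<^sup>2 - inverse (q\<^sup>2)) A1"
  unfolding mmul_tridiag_tridiag msmult_band madd_band
  by (rule band_cong) (simp_all add: u_succ_mod u_pred_mod field_simps eval_nat_numeral)

lemma band_rel_1_0:
  "madd (msmult q (mmul D A1 A0)) (msmult (- inverse q) (mmul D A0 A1))
     = msmult (q\<^sup>2 - inverse (q\<^sup>2)) Ainf"
  unfolding mmul_tridiag_tridiag msmult_band madd_band
  by (rule band_cong) (simp_all add: u_succ_mod u_pred_mod field_simps eval_nat_numeral)

text \<open>The diagonal entries of the third relation and of \<open>p\<close> are the only coefficients in which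
\<open>s\<close> and \<open>t\<close> meet, through the products \<open>s\<^sub>j t\<^sub>j\<close> and \<open>s\<^sub>j\<^sub>-\<^sub>1 t\<^sub>j\<^sub>-\<^sub>1\<close>.\<close>

lemma diagonal_rel_inf_1:
  assumes "j < D"
  shows "(q\<^sup>2 * u (int j) - inverse (q\<^sup>2 * u (int j))) * (s j * t j)
       - (u (int j) / q\<^sup>2 - inverse (u (int j) / q\<^sup>2)) * (s (pred_mod D j) * t (pred_mod D j))
       = (q\<^sup>2 - inverse (q\<^sup>2)) * (u (int j) + inverse (u (int j)))"
  using r_coef_diff[of "int j"]
  by (simp add: s_mult_t[OF assms] s_mult_t_pred[OF assms] lamhat_succ lamhat_pred lam_eq mult.commute)

lemma band_rel_inf_1:
  "madd (msmult q (mmul D Ainf A1)) (msmult (- inverse q) (mmul D A1 Ainf))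
     = msmult (q\<^sup>2 - inverse (q\<^sup>2)) A0"
  unfolding mmul_tridiag_tridiag msmult_band madd_band
  apply (rule band_cong)
  subgoal for j
    using diagonal_rel_inf_1[of j] by (simp add: u_succ_mod u_pred_mod field_simps) algebra
  by (simp_all add: u_succ_mod u_pred_mod field_simps eval_nat_numeral)

lemma diagonal_periph:
  assumes "j < D"
  shows "(q\<^sup>2 * u (int j) ^ 2 - inverse (q\<^sup>2)) * (s j * t j)
       + (q\<^sup>2 * inverse (u (int j)) ^ 2 - inverse (q\<^sup>2)) * (s (pred_mod D j) * t (pred_mod D j))
       = w + q\<^sup>2 * (u (int j) + inverse (u (int j)))\<^sup>2 - q\<^sup>2 - inverse (q\<^sup>2)"
proof -
  have succ: "q\<^sup>2 * u (int j) ^ 2 - inverse (q\<^sup>2) = u (int j) * lamhat q \<sigma> (int j + 1)"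
    by (simp add: lamhat_succ) (simp add: field_simps power2_eq_square)
  have pred: "q\<^sup>2 * inverse (u (int j)) ^ 2 - inverse (q\<^sup>2) = - inverse (u (int j)) * lamhat q \<sigma> (int j - 1)"
    by (simp add: lamhat_pred) (simp add: field_simps power2_eq_square)
  have "(q\<^sup>2 * u (int j) ^ 2 - inverse (q\<^sup>2)) * (s j * t j)
       + (q\<^sup>2 * inverse (u (int j)) ^ 2 - inverse (q\<^sup>2)) * (s (pred_mod D j) * t (pred_mod D j))
     = u (int j) * r_coef q \<sigma> w (int j) * lamhat q \<sigma> (int j + 1)
       - inverse (u (int j)) * r_coef q \<sigma> w (int j - 1) * lamhat q \<sigma> (int j - 1)"
    unfolding succ pred s_mult_t[OF assms] s_mult_t_pred[OF assms] by (simp add: algebra_simps)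
  also have "\<dots> = w + q\<^sup>2 * (lam q \<sigma> (int j))\<^sup>2 - q\<^sup>2 - inverse (q\<^sup>2)"
    by (rule r_coef_periph)
  finally show ?thesis
    by (simp add: lam_eq)
qed

lemma band_periph: "meq D (periph D q A0 A1 Ainf) (diag D (\<lambda>_. w))"
proof -
  have "meq D (periph D q A0 A1 Ainf)
     (madd (msmult q (mmul D A0 (mmul D Ainf A1)))
     (madd (msmult (- (q\<^sup>2)) (mmul D A0 A0))
     (madd (msmult (- (q\<^sup>2)) (mmul D A1 A1))
     (madd (msmult (- inverse (q\<^sup>2)) (mmul D Ainf Ainf))
           (msmult (q\<^sup>2 + inverse (q\<^sup>2)) (diag D (\<lambda>_. 1)))))))"
    unfolding periph_def by (intro meq_madd meq_msmult meq_refl mid_eq_diag)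
  also have "(madd (msmult q (mmul D A0 (mmul D Ainf A1)))
     (madd (msmult (- (q\<^sup>2)) (mmul D A0 A0))
     (madd (msmult (- (q\<^sup>2)) (mmul D A1 A1))
     (madd (msmult (- inverse (q\<^sup>2)) (mmul D Ainf Ainf))
           (msmult (q\<^sup>2 + inverse (q\<^sup>2)) (diag D (\<lambda>_. 1))))))) = diag D (\<lambda>_. w)"
    unfolding mmul_tridiag_tridiag mmul_diag_band msmult_band madd_band
    apply (rule band_cong)
    subgoal for j
      using diagonal_periph[of j] by (simp add: u_succ_mod u_pred_mod field_simps) algebra
    by (simp_all add: u_succ_mod u_pred_mod field_simps eval_nat_numeral)
  finally show ?thesis .
qed

lemma skein_rels_bands: "skein_rels D q A0 A1 Ainf"
  unfolding skein_rels_def band_rel_0_inf band_rel_1_0 band_rel_inf_1 by simp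

lemma skein_rels_rho: "skein_rels D q (rho0 D q \<sigma>) (rho1 D q \<sigma> s t) (rhoInf D s t)"
  using skein_rels_bands skein_rels_meq_cong[OF rho_eq_bands] by blast

lemma periph_rho: "meq D (periph D q (rho0 D q \<sigma>) (rho1 D q \<sigma> s t) (rhoInf D s t)) (msmult w mid)"
  using periph_meq_cong[OF rho_eq_bands] band_periph msmult_mid_eq_diag[of D w]
  by (blast intro: meq_trans meq_sym)

lemma cheb_mat_rho0: "meq D (cheb_mat D D (rho0 D q \<sigma>)) (msmult (z0 D \<sigma>) mid)"
proof -
  have "chebyshev D (u (int j) + inverse (u (int j))) = z0 D \<sigma>" for j
    by (simp add: chebyshev_add_inverse power_inverse u_power_D z0_def)
  then have "meq D (cheb_mat D D A0) (diag D (\<lambda>_. z0 D \<sigma>))"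
    using cheb_mat_diag[of D D "\<lambda>j. u (int j) + inverse (u (int j))"] by (simp only:)
  then show ?thesis
    using cheb_mat_meq_cong[OF rho_eq_bands(1)] msmult_mid_eq_diag[of D "z0 D \<sigma>"]
    by (blast intro: meq_trans meq_sym)
qed

end

theorem mainTheorem5:
  fixes q \<sigma> w :: complex and s t :: "nat \<Rightarrow> complex"
  assumes "root_of_unity q"
    and "q ^ 4 \<noteq> 1"
    and "general_sigma q \<sigma>"
    and "(s, t) \<in> E0 q \<sigma> w"
  shows "skein_rels (ordq2 q) q (rho0 (ordq2 q) q \<sigma>) (rho1 (ordq2 q) q \<sigma> s t) (rhoInf (ordq2 q) s t)
       \<and> meq (ordq2 q) (cheb_mat (ordq2 q) (ordq2 q) (rho0 (ordq2 q) q \<sigma>))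
              (msmult (z0 (ordq2 q) \<sigma>) mid)
       \<and> meq (ordq2 q) (periph (ordq2 q) q (rho0 (ordq2 q) q \<sigma>) (rho1 (ordq2 q) q \<sigma> s t) (rhoInf (ordq2 q) s t))
              (msmult w mid)"
proof -
  interpret cyclic_skein_rep q \<sigma> w s t
    using assms(1,3,4) by unfold_locales
  show ?thesis
    using skein_rels_rho cheb_mat_rho0 periph_rho by blast
qed

end
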